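(* Let $A$ be a random variable with $\mathbb P(A>0)=1$ and law $\rho$. If $\mu$ is a solution of equation (2) for $\rho$ and $\eta\sim\mu$ satisfies $\mathbb E\eta^{p+1}<\infty$ for some $p>0$, then $\mathbb E A^p<1$.
   Context: For a probability measure $\nu$ on $[0,\infty)$ with mean $m\in(0,\infty)$, its size-biased distribution is $\nu_{sb}(dx)=m^{-1}x\,\nu(dx)$. A probability measure $\mu$ on $[0,\infty)$ with mean in $(0,\infty)$ is a solution of equation (2) for $\rho$ if $\eta_{sb}\overset{d}{=}A\eta_{sb}+\eta$, where $\eta\sim\mu$, $\eta_{sb}\sim\mu_{sb}$ and $A\sim\rho$ are mutually independent. *)

theory Defs
  imports "HOL-Probability.Probability"
begin

definition mean_nn :: "real measure \<Rightarrow> ennreal" where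
  "mean_nn \<mu> = (\<integral>\<^sup>+ x. ennreal x \<partial>\<mu>)"

definition size_biased :: "real measure \<Rightarrow> real measure" where
  "size_biased \<mu> = density \<mu> (\<lambda>x. ennreal x / mean_nn \<mu>)"

definition prob_on_nonneg :: "real measure \<Rightarrow> bool" where
  "prob_on_nonneg \<mu> \<longleftrightarrow> prob_space \<mu> \<and> sets \<mu> = sets borel \<and> (AE x in \<mu>. 0 \<le> x)"

text \<open>mu solves equation (2) for rho: eta_sb =d A eta_sb + eta with A ~ rho,
  eta_sb ~ mu_sb, eta ~ mu independent, i.e. the image of the product measure
  under (a,x,y) |-> a*x+y is mu_sb.\<close>
definition solves_eq2 :: "real measure \<Rightarrow> real measure \<Rightarrow> bool" where
  "solves_eq2 \<rho> \<mu> \<longleftrightarrow> prob_on_nonneg \<mu> \<and> 0 < mean_nn \<mu> \<and> mean_nn \<mu> < \<infinity> \<and>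
     distr (\<rho> \<Otimes>\<^sub>M (size_biased \<mu> \<Otimes>\<^sub>M \<mu>)) borel (\<lambda>(a, x, y). a * x + y)
       = size_biased \<mu>"

end

theory Submission
  imports Defs
begin

text \<open>
  Let c be the p-th moment of the size-biased law. Equation (2) gives c = E (A \<eta>_sb + \<eta>)^p.
  Splitting (a x + y)^p = a^p x^p + ((a x + y)^p - (a x)^p) and using independence yields
  c = E A^p c + G, where G > 0 because the increment is positive wherever y > 0 and \<eta> has
  positive mean. Since E \<eta>^(p+1) < \<infinity>, the moment c is finite, and so E A^p < 1.
\<close>

lemma ennreal_less_one_of_eq_mult_add:
  fixes c e g :: ennreal
  assumes "c = e * c + g" and "c < \<infinity>" and "0 < g"
  shows "e < 1"
proof (rule ccontr)
  assume "\<not> e < 1"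
  then have "c + g \<le> e * c + g"
    by (intro add_right_mono) (metis mult_1 mult_right_mono not_less zero_le)
  with assms show False
    by (metis add_0_right ennreal_add_left_cancel_le less_top not_le)
qed

lemma ennreal_powr_mult_add:
  fixes a x y p :: real
  assumes "0 \<le> a" "0 \<le> x" "0 \<le> y" "0 \<le> p"
  shows "ennreal ((a * x + y) powr p)
    = ennreal (a powr p) * ennreal (x powr p) + ennreal ((a * x + y) powr p - (a * x) powr p)"
proof -
  have "(a * x) powr p \<le> (a * x + y) powr p"
    using assms by (intro powr_mono2) auto
  then have "ennreal ((a * x + y) powr p)
      = ennreal ((a * x) powr p) + ennreal ((a * x + y) powr p - (a * x) powr p)"
    using assms by (simp flip: ennreal_plus)
  then show ?thesis
    using assms by (simp add: powr_mult ennreal_mult)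
qed

lemma (in prob_space) distr_pair_snd:
  assumes "sigma_finite_measure N"
  shows "distr (M \<Otimes>\<^sub>M N) N snd = N"
proof (intro measure_eqI)
  fix A assume A: "A \<in> sets (distr (M \<Otimes>\<^sub>M N) N snd)"
  then have "emeasure (distr (M \<Otimes>\<^sub>M N) N snd) A = emeasure (M \<Otimes>\<^sub>M N) (space M \<times> A)"
    by (auto simp: emeasure_distr space_pair_measure dest: sets.sets_into_space
        intro!: arg_cong2[where f=emeasure])
  with A show "emeasure (distr (M \<Otimes>\<^sub>M N) N snd) A = emeasure N A"
    by (simp add: sigma_finite_measure.emeasure_pair_measure_Times[OF assms] emeasure_space_1)
qed simp

lemma (in pair_prob_space) AE_pair_measure_fst_snd:
  assumes "AE x in M1. P x" and "AE y in M2. Q y"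
  shows "AE z in M1 \<Otimes>\<^sub>M M2. P (fst z) \<and> Q (snd z)"
proof -
  have "AE z in M1 \<Otimes>\<^sub>M M2. P (fst z)"
    by (rule AE_distrD[OF measurable_fst]) (use assms(1) in \<open>simp only: M2.distr_pair_fst\<close>)
  moreover have "AE z in M1 \<Otimes>\<^sub>M M2. Q (snd z)"
    by (rule AE_distrD[OF measurable_snd])
      (use assms(2) in \<open>simp only: M1.distr_pair_snd[OF M2.sigma_finite_measure_axioms]\<close>)
  ultimately show ?thesis
    by eventually_elim simp
qed

lemma (in pair_prob_space) nn_integral_pair_fst:
  assumes "f \<in> borel_measurable M1"
  shows "(\<integral>\<^sup>+ z. f (fst z) \<partial>(M1 \<Otimes>\<^sub>M M2)) = integral\<^sup>N M1 f"
  using nn_integral_distr[OF measurable_fst[of M1 M2], of f] assms by (simp add: M2.distr_pair_fst)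

lemma (in pair_prob_space) nn_integral_pair_snd:
  assumes "f \<in> borel_measurable M2"
  shows "(\<integral>\<^sup>+ z. f (snd z) \<partial>(M1 \<Otimes>\<^sub>M M2)) = integral\<^sup>N M2 f"
  using nn_integral_distr[OF measurable_snd[of M1 M2], of f] assms
  by (simp add: M1.distr_pair_snd M2.sigma_finite_measure_axioms)

lemma (in pair_sigma_finite) nn_integral_fst_mult_snd:
  assumes "f \<in> borel_measurable M1" and "g \<in> borel_measurable M2"
  shows "(\<integral>\<^sup>+ z. f (fst z) * g (snd z) \<partial>(M1 \<Otimes>\<^sub>M M2)) = integral\<^sup>N M1 f * integral\<^sup>N M2 g"
proof -
  have "(\<integral>\<^sup>+ z. f (fst z) * g (snd z) \<partial>(M1 \<Otimes>\<^sub>M M2)) = (\<integral>\<^sup>+ x. \<integral>\<^sup>+ y. f x * g y \<partial>M2 \<partial>M1)"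
    using assms by (subst M2.nn_integral_fst[symmetric]) auto
  also have "\<dots> = (\<integral>\<^sup>+ x. f x * integral\<^sup>N M2 g \<partial>M1)"
    using assms by (simp add: nn_integral_cmult)
  also have "\<dots> = integral\<^sup>N M1 f * integral\<^sup>N M2 g"
    using assms by (simp add: nn_integral_multc)
  finally show ?thesis .
qed

lemma sets_size_biased [simp, measurable_cong]: "sets (size_biased \<mu>) = sets \<mu>"
  by (simp add: size_biased_def)

lemma nn_integral_size_biased:
  assumes [measurable_cong]: "sets \<mu> = sets borel" and [measurable]: "f \<in> borel_measurable \<mu>"
  shows "(\<integral>\<^sup>+ x. f x \<partial>size_biased \<mu>) = (\<integral>\<^sup>+ x. ennreal x * f x \<partial>\<mu>) / mean_nn \<mu>"
proof -
  have "(\<integral>\<^sup>+ x. f x \<partial>size_biased \<mu>) = (\<integral>\<^sup>+ x. ennreal x * f x / mean_nn \<mu> \<partial>\<mu>)"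
    unfolding size_biased_def
    by (subst nn_integral_density) (auto simp: divide_ennreal_def ac_simps intro!: nn_integral_cong)
  also have "\<dots> = (\<integral>\<^sup>+ x. ennreal x * f x \<partial>\<mu>) / mean_nn \<mu>"
    by (rule nn_integral_divide) measurable
  finally show ?thesis .
qed

lemma prob_space_size_biased:
  assumes "sets \<mu> = sets borel" and "0 < mean_nn \<mu>" and "mean_nn \<mu> < \<infinity>"
  shows "prob_space (size_biased \<mu>)"
proof
  have "(\<integral>\<^sup>+ x. 1 \<partial>size_biased \<mu>) = mean_nn \<mu> / mean_nn \<mu>"
    using nn_integral_size_biased[OF assms(1), of "\<lambda>_. 1"] by (simp add: mean_nn_def)
  with assms(2,3) show "emeasure (size_biased \<mu>) (space (size_biased \<mu>)) = 1"
    by (simp add: ennreal_divide_self)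
qed

lemma AE_size_biased:
  assumes [measurable_cong]: "sets \<mu> = sets borel" and "AE x in \<mu>. P x"
  shows "AE x in size_biased \<mu>. P x"
  using assms(2) unfolding size_biased_def by (subst AE_density) (auto elim: AE_mp)

lemma nn_integral_size_biased_powr_less_top:
  assumes "sets \<mu> = sets borel" and "AE x in \<mu>. 0 \<le> x" and "0 < mean_nn \<mu>"
    and "(\<integral>\<^sup>+ x. ennreal (x powr (p + 1)) \<partial>\<mu>) < \<infinity>"
  shows "(\<integral>\<^sup>+ x. ennreal (x powr p) \<partial>size_biased \<mu>) < \<infinity>"
proof -
  have "(\<integral>\<^sup>+ x. ennreal (x powr p) \<partial>size_biased \<mu>)
      = (\<integral>\<^sup>+ x. ennreal (x powr (p + 1)) \<partial>\<mu>) / mean_nn \<mu>"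
  proof -
    have "x powr (p + 1) = x * x powr p" if "0 \<le> x" for x :: real
      using that by (cases "x = 0") (auto simp: powr_add)
    then have "AE x in \<mu>. ennreal x * ennreal (x powr p) = ennreal (x powr (p + 1))"
      using assms(2) by (auto simp: ennreal_mult elim!: AE_mp)
    then show ?thesis
      using assms(1) by (simp add: nn_integral_size_biased cong: nn_integral_cong_AE)
  qed
  with assms(3,4) show ?thesis
    by (simp add: divide_ennreal_def ennreal_mult_eq_top_iff less_top[symmetric])
qed

lemma nn_integral_powr_affine_decomposition:
  fixes \<rho> \<nu> \<mu> :: "real measure" and p :: real
  assumes "prob_space \<rho>" "prob_space \<nu>" "prob_space \<mu>"
    and [measurable_cong]: "sets \<rho> = sets borel" "sets \<nu> = sets borel" "sets \<mu> = sets borel"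
    and "AE a in \<rho>. 0 \<le> a" "AE x in \<nu>. 0 \<le> x" "AE y in \<mu>. 0 \<le> y"
    and "0 < (\<integral>\<^sup>+ y. ennreal y \<partial>\<mu>)" and "0 < p"
  obtains G where "0 < G"
    and "integral\<^sup>N (\<rho> \<Otimes>\<^sub>M (\<nu> \<Otimes>\<^sub>M \<mu>)) (\<lambda>(a, x, y). ennreal ((a * x + y) powr p))
      = (\<integral>\<^sup>+ a. ennreal (a powr p) \<partial>\<rho>) * (\<integral>\<^sup>+ x. ennreal (x powr p) \<partial>\<nu>) + G"
proof
  interpret \<nu>: prob_space \<nu> by fact
  interpret \<mu>: prob_space \<mu> by fact
  interpret \<nu>\<mu>: pair_prob_space \<nu> \<mu> ..
  interpret \<rho>\<nu>\<mu>: pair_prob_space \<rho> "\<nu> \<Otimes>\<^sub>M \<mu>"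
    by (intro pair_prob_space.intro pair_sigma_finite.intro prob_space_imp_sigma_finite
        prob_space_pair assms(1-3))
  let ?M = "\<rho> \<Otimes>\<^sub>M (\<nu> \<Otimes>\<^sub>M \<mu>)"
  define G where "G = integral\<^sup>N ?M (\<lambda>(a, x, y). ennreal ((a * x + y) powr p - (a * x) powr p))"
  have nonneg: "AE z in ?M. 0 \<le> fst z \<and> 0 \<le> fst (snd z) \<and> 0 \<le> snd (snd z)"
    using \<rho>\<nu>\<mu>.AE_pair_measure_fst_snd[OF assms(7) \<nu>\<mu>.AE_pair_measure_fst_snd[OF assms(8,9)]] by simp
  have "integral\<^sup>N ?M (\<lambda>(a, x, y). ennreal ((a * x + y) powr p))
      = integral\<^sup>N ?M (\<lambda>(a, x, y). ennreal (a powr p) * ennreal (x powr p)) + G"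
    unfolding G_def using nonneg assms(11)
    by (subst nn_integral_add[symmetric]) (auto intro!: nn_integral_cong_AE elim!: AE_mp
        simp: ennreal_powr_mult_add split: prod.splits)
  also have "integral\<^sup>N ?M (\<lambda>(a, x, y). ennreal (a powr p) * ennreal (x powr p))
      = (\<integral>\<^sup>+ a. ennreal (a powr p) \<partial>\<rho>) * (\<integral>\<^sup>+ x. ennreal (x powr p) \<partial>\<nu>)"
    using \<rho>\<nu>\<mu>.nn_integral_fst_mult_snd[of "\<lambda>a. ennreal (a powr p)" "\<lambda>w. ennreal (fst w powr p)"]
      \<nu>\<mu>.nn_integral_pair_fst[of "\<lambda>x. ennreal (x powr p)"]
    by (simp add: case_prod_beta')
  finally show "integral\<^sup>N ?M (\<lambda>(a, x, y). ennreal ((a * x + y) powr p))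
      = (\<integral>\<^sup>+ a. ennreal (a powr p) \<partial>\<rho>) * (\<integral>\<^sup>+ x. ennreal (x powr p) \<partial>\<nu>) + G" .
  show "0 < G"
  proof (rule ccontr)
    assume "\<not> 0 < G"
    then have "AE z in ?M. (case z of (a, x, y) \<Rightarrow> ennreal ((a * x + y) powr p - (a * x) powr p)) = 0"
      unfolding G_def by (subst nn_integral_0_iff_AE[symmetric]) (auto simp: zero_less_iff_neq_zero)
    then have "AE z in ?M. ennreal (snd (snd z)) = 0"
      using nonneg
    proof eventually_elim
      case (elim z)
      obtain a x y where z: "z = (a, x, y)" by (cases z) auto
      with elim have "\<not> (a * x) powr p < (a * x + y) powr p"
        by (simp add: ennreal_eq_0_iff)
      with elim z assms(11) show ?case
        using powr_less_mono2[of p "a * x" "a * x + y"] by (force simp: ennreal_eq_0_iff)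
    qed
    then have "(\<integral>\<^sup>+ z. ennreal (snd (snd z)) \<partial>?M) = 0"
      by (subst nn_integral_0_iff_AE) auto
    moreover have "(\<integral>\<^sup>+ z. ennreal (snd (snd z)) \<partial>?M) = (\<integral>\<^sup>+ y. ennreal y \<partial>\<mu>)"
      by (subst \<rho>\<nu>\<mu>.nn_integral_pair_snd[of "\<lambda>w. ennreal (snd w)"], measurable)
        (rule \<nu>\<mu>.nn_integral_pair_snd, measurable)
    ultimately show False
      using assms(10) by simp
  qed
qed

theorem proposition1p2:
  fixes \<rho> \<mu> :: "real measure" and p :: real
  assumes "prob_space \<rho>" and "sets \<rho> = sets borel" and "AE a in \<rho>. 0 < a"
    and "solves_eq2 \<rho> \<mu>"
    and "p > 0"
    and "(\<integral>\<^sup>+ x. ennreal (x powr (p + 1)) \<partial>\<mu>) < \<infinity>"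
  shows "(\<integral>\<^sup>+ a. ennreal (a powr p) \<partial>\<rho>) < 1"
proof -
  let ?\<nu> = "size_biased \<mu>"
  have \<mu>: "prob_space \<mu>" "sets \<mu> = sets borel" "AE x in \<mu>. 0 \<le> x"
    and mean: "0 < mean_nn \<mu>" "mean_nn \<mu> < \<infinity>"
    and eq2: "distr (\<rho> \<Otimes>\<^sub>M (?\<nu> \<Otimes>\<^sub>M \<mu>)) borel (\<lambda>(a, x, y). a * x + y) = ?\<nu>"
    using assms(4) unfolding solves_eq2_def prob_on_nonneg_def by auto
  note [measurable_cong] = assms(2) \<mu>(2)
  have "AE a in \<rho>. 0 \<le> a"
    using assms(3) by auto
  then obtain G where "0 < G" and decomposition:
    "integral\<^sup>N (\<rho> \<Otimes>\<^sub>M (?\<nu> \<Otimes>\<^sub>M \<mu>)) (\<lambda>(a, x, y). ennreal ((a * x + y) powr p))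
      = (\<integral>\<^sup>+ a. ennreal (a powr p) \<partial>\<rho>) * (\<integral>\<^sup>+ x. ennreal (x powr p) \<partial>?\<nu>) + G"
    using nn_integral_powr_affine_decomposition[of \<rho> ?\<nu> \<mu> p] assms(1,2,5) \<mu> mean
      prob_space_size_biased AE_size_biased
    by (auto simp: mean_nn_def)
  have "(\<integral>\<^sup>+ x. ennreal (x powr p) \<partial>?\<nu>)
      = integral\<^sup>N (\<rho> \<Otimes>\<^sub>M (?\<nu> \<Otimes>\<^sub>M \<mu>)) (\<lambda>(a, x, y). ennreal ((a * x + y) powr p))"
    by (subst (1) eq2[symmetric], subst nn_integral_distr) (auto simp: case_prod_beta')
  moreover have "(\<integral>\<^sup>+ x. ennreal (x powr p) \<partial>?\<nu>) < \<infinity>"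
    using nn_integral_size_biased_powr_less_top \<mu> mean assms(6) by blast
  ultimately show ?thesis
    using ennreal_less_one_of_eq_mult_add \<open>0 < G\<close> decomposition by metis
qed

end
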